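(* Let $\mathbb{F}$ be a field of characteristic $2$, $V$ a finite-dimensional $\mathbb{F}$-vector space and $b$ a non-degenerate symmetric bilinear form on $V$ with attached quadratic form $Q: x\mapsto b(x,x)$. Assume that $\operatorname{Ker} Q$ is totally $b$-singular. Then $\operatorname{Ker} Q$ is stable under every nilpotent $b$-symmetric endomorphism of $V$.
   Context: $\operatorname{Ker} Q = \{x\in V : Q(x)=0\}$, a linear subspace in characteristic $2$. A subspace $X$ is totally $b$-singular if $b(x,y)=0$ for all $x,y\in X$. An endomorphism $u$ is $b$-symmetric if $(x,y)\mapsto b(x,u(y))$ is symmetric. *)

theory Defs
  imports Complex_Main
begin

definition bilinear_form :: "('f::field \<Rightarrow> 'v::ab_group_add \<Rightarrow> 'v) \<Rightarrow> ('v \<Rightarrow> 'v \<Rightarrow> 'f) \<Rightarrow> bool" where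
  "bilinear_form scale b \<longleftrightarrow>
     (\<forall>y. Vector_Spaces.linear scale (*) (\<lambda>x. b x y)) \<and>
     (\<forall>x. Vector_Spaces.linear scale (*) (\<lambda>y. b x y))"

definition symmetric_form :: "('v \<Rightarrow> 'v \<Rightarrow> 'f) \<Rightarrow> bool" where
  "symmetric_form b \<longleftrightarrow> (\<forall>x y. b x y = b y x)"

definition nondegenerate :: "('v::zero \<Rightarrow> 'v \<Rightarrow> 'f::zero) \<Rightarrow> bool" where
  "nondegenerate b \<longleftrightarrow> (\<forall>x. (\<forall>y. b x y = 0) \<longrightarrow> x = 0)"

definition quad_form :: "('v \<Rightarrow> 'v \<Rightarrow> 'f) \<Rightarrow> 'v \<Rightarrow> 'f" where
  "quad_form b x = b x x"

definition KerQ :: "('v \<Rightarrow> 'v \<Rightarrow> 'f::zero) \<Rightarrow> 'v set" where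
  "KerQ b = {x. quad_form b x = 0}"

definition totally_singular :: "('v \<Rightarrow> 'v \<Rightarrow> 'f::zero) \<Rightarrow> 'v set \<Rightarrow> bool" where
  "totally_singular b X \<longleftrightarrow> (\<forall>x\<in>X. \<forall>y\<in>X. b x y = 0)"

definition b_symmetric :: "('v \<Rightarrow> 'v \<Rightarrow> 'f) \<Rightarrow> ('v \<Rightarrow> 'v) \<Rightarrow> bool" where
  "b_symmetric b u \<longleftrightarrow> (\<forall>x y. b x (u y) = b y (u x))"

definition nilpotent_endo :: "('v::zero \<Rightarrow> 'v) \<Rightarrow> bool" where
  "nilpotent_endo u \<longleftrightarrow> (\<exists>k. (u ^^ k) = (\<lambda>_. 0))"

end

theory Submission
  imports Defs
begin

text \<open>For \<open>x \<in> Ker Q\<close> and a \<open>b\<close>-symmetric \<open>u\<close> one has \<open>Q(u\<^sup>k x) = b(x, u\<^sup>2\<^sup>k x)\<close>, which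
  vanishes by total singularity as soon as \<open>u\<^sup>2\<^sup>k x \<in> Ker Q\<close>. Since \<open>u\<^sup>k x = 0\<close> for large \<open>k\<close>,
  descending induction on \<open>k\<close> gives \<open>u\<^sup>k x \<in> Ker Q\<close> for all \<open>k \<ge> 1\<close>.\<close>

lemma bilinear_form_zero_left:
  assumes "bilinear_form scale b"
  shows "b 0 y = 0"
  using assms unfolding bilinear_form_def Vector_Spaces.linear_def by (metis module_hom.zero)

lemma b_symmetric_funpow:
  assumes sym: "symmetric_form b" and bs: "b_symmetric b u"
  shows "b ((u ^^ k) x) y = b x ((u ^^ k) y)"
proof (induction k arbitrary: x y)
  case 0
  then show ?case by simp
next
  case (Suc k)
  have "b ((u ^^ Suc k) x) y = b y (u ((u ^^ k) x))"
    using sym unfolding symmetric_form_def by simp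
  also have "\<dots> = b ((u ^^ k) x) (u y)"
    using bs unfolding b_symmetric_def by metis
  also have "\<dots> = b x ((u ^^ Suc k) y)"
    using Suc by (simp add: funpow_swap1)
  finally show ?case .
qed

lemma quad_form_funpow:
  assumes "symmetric_form b" and "b_symmetric b u"
  shows "quad_form b ((u ^^ k) x) = b x ((u ^^ (2 * k)) x)"
proof -
  have "quad_form b ((u ^^ k) x) = b x ((u ^^ k) ((u ^^ k) x))"
    unfolding quad_form_def by (rule b_symmetric_funpow[OF assms])
  also have "\<dots> = b x ((u ^^ (2 * k)) x)"
    by (simp add: mult_2 funpow_add)
  finally show ?thesis .
qed

lemma nilpotent_endo_funpow_eq_0:
  assumes "nilpotent_endo u"
  shows "\<exists>n. \<forall>k\<ge>n. u ^^ k = (\<lambda>_. 0)"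
proof -
  from assms obtain n where n: "u ^^ n = (\<lambda>_. 0)"
    unfolding nilpotent_endo_def by blast
  have "u ^^ k = (\<lambda>_. 0)" if "n \<le> k" for k
  proof -
    have "u ^^ k = u ^^ n \<circ> u ^^ (k - n)"
      using that by (simp add: funpow_add[symmetric])
    then show ?thesis using n by auto
  qed
  then show ?thesis by blast
qed

lemma funpow_mem_KerQ:
  assumes sym: "symmetric_form b" and bs: "b_symmetric b u"
    and ts: "totally_singular b (KerQ b)" and b00: "b 0 0 = 0"
    and nil: "nilpotent_endo u" and x: "x \<in> KerQ b"
    and k: "1 \<le> k"
  shows "(u ^^ k) x \<in> KerQ b"
proof -
  obtain n where vanish: "\<forall>k\<ge>n. u ^^ k = (\<lambda>_. 0)"
    using nilpotent_endo_funpow_eq_0[OF nil] by blast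
  from k show ?thesis
  proof (induction k rule: measure_induct_rule[of "\<lambda>k. n - k"])
    case (less k)
    show ?case
    proof (cases "n \<le> k")
      case True
      then have "(u ^^ k) x = 0" using vanish by simp
      then show ?thesis using b00 by (simp add: KerQ_def quad_form_def)
    next
      case False
      with less.prems have "n - 2 * k < n - k" by simp
      then have "(u ^^ (2 * k)) x \<in> KerQ b"
        using less.prems by (intro less.IH) simp_all
      then have "b x ((u ^^ (2 * k)) x) = 0"
        using ts x unfolding totally_singular_def by blast
      then show ?thesis
        by (simp add: KerQ_def quad_form_funpow[OF sym bs])
    qed
  qed
qed

theorem lemma5p1:
  fixes scale :: "'f::field \<Rightarrow> 'v::ab_group_add \<Rightarrow> 'v"
    and b :: "'v \<Rightarrow> 'v \<Rightarrow> 'f"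
  assumes char2: "CHAR('f) = 2"
    and fdim: "\<exists>B. finite_dimensional_vector_space scale B"
    and bil: "bilinear_form scale b"
    and sym: "symmetric_form b"
    and nondeg: "nondegenerate b"
    and ts: "totally_singular b (KerQ b)"
  shows "\<forall>u. Vector_Spaces.linear scale scale u \<and> nilpotent_endo u \<and> b_symmetric b u
           \<longrightarrow> u ` KerQ b \<subseteq> KerQ b"
proof (intro allI impI image_subsetI)
  fix u x
  assume "Vector_Spaces.linear scale scale u \<and> nilpotent_endo u \<and> b_symmetric b u"
    and "x \<in> KerQ b"
  then have "(u ^^ 1) x \<in> KerQ b"
    using funpow_mem_KerQ[OF sym _ ts bilinear_form_zero_left[OF bil]] by blast
  then show "u x \<in> KerQ b" by simp
qed

end
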